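(* Consider two linear classifiers $h_1(x)=\mathbf 1(w_1^\top x\ge0)$ and $h_2(x)=\mathbf 1(w_2^\top x\ge0)$ on $\mathbb R^2$ with $\|w_i\|_2=1$, and an agent $x^{(0)}\in\mathbb R^2$ with $h_1(x^{(0)})=0$ and $h_2(P_{w_1}(x^{(0)}))=0$. Let $0<\theta<\pi$ satisfy $\cos\theta=-w_1^\top w_2$. Then, for sequential manipulation with Euclidean cost: 1. If $|\tan\theta|>\|P_{w_1}(x^{(0)})\|_2/d_{w_1}(x^{(0)})$, the best response is $x^{(2)}=x^{(1)}=\vec 0$, and $c^*_{\mathrm{seq}}(x^{(0)},\{h_1,h_2\})=\|x^{(0)}\|_2$. 2. If $|\tan\theta|\le\|P_{w_1}(x^{(0)})\|_2/d_{w_1}(x^{(0)})$, the best response is $$x^{(1)}=\Big(1-\frac{d_{w_1}(x^{(0)})}{\|P_{w_1}(x^{(0)})\|_2}|\tan\theta|\Big)P_{w_1}(x^{(0)}),\qquad x^{(2)}=P_{w_2}(x^{(1)}),$$ and $c^*_{\mathrm{seq}}(x^{(0)},\{h_1,h_2\})=d_{w_1}(x^{(0)})|\cos\theta|+\|P_{w_1}(x^{(0)})\|_2\sin\theta$.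
   Context: For a unit vector $w\in\mathbb R^2$: $P_w(x)=x$ if $w^\top x\ge0$ and $P_w(x)=x-(w^\top x)w$ otherwise (projection onto $\{y:w^\top y\ge0\}$); $d_w(x)=0$ if $w^\top x\ge0$ and $d_w(x)=|w^\top x|$ otherwise. The sequential manipulation cost is $c^*_{\mathrm{seq}}(x^{(0)},\{h_1,h_2\})=\min\{\|x^{(1)}-x^{(0)}\|_2+\|x^{(2)}-x^{(1)}\|_2:h_1(x^{(1)})=1,h_2(x^{(2)})=1\}$, and the best response is a minimizing pair $(x^{(1)},x^{(2)})$. *)

theory Defs
  imports "HOL-Analysis.Analysis"
begin

definition lin_clf :: "real^2 \<Rightarrow> real^2 \<Rightarrow> nat" where
  "lin_clf w x = (if w \<bullet> x \<ge> 0 then 1 else 0)"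

text \<open>Projection onto the half-plane {y. w^T y >= 0} (w a unit vector).\<close>
definition proj_hs :: "real^2 \<Rightarrow> real^2 \<Rightarrow> real^2" where
  "proj_hs w x = (if w \<bullet> x \<ge> 0 then x else x - (w \<bullet> x) *\<^sub>R w)"

definition dist_hs :: "real^2 \<Rightarrow> real^2 \<Rightarrow> real" where
  "dist_hs w x = (if w \<bullet> x \<ge> 0 then 0 else \<bar>w \<bullet> x\<bar>)"

definition seq_cost :: "real^2 \<Rightarrow> real^2 \<Rightarrow> real^2 \<Rightarrow> real" where
  "seq_cost x0 x1 x2 = norm (x1 - x0) + norm (x2 - x1)"

definition c_seq :: "real^2 \<Rightarrow> (real^2 \<Rightarrow> nat) \<Rightarrow> (real^2 \<Rightarrow> nat) \<Rightarrow> real" where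
  "c_seq x0 h1 h2 = Inf {seq_cost x0 x1 x2 | x1 x2. h1 x1 = 1 \<and> h2 x2 = 1}"

definition best_response ::
  "real^2 \<Rightarrow> (real^2 \<Rightarrow> nat) \<Rightarrow> (real^2 \<Rightarrow> nat) \<Rightarrow> real^2 \<Rightarrow> real^2 \<Rightarrow> bool" where
  "best_response x0 h1 h2 x1 x2 \<longleftrightarrow>
     h1 x1 = 1 \<and> h2 x2 = 1 \<and>
     (\<forall>y1 y2. h1 y1 = 1 \<longrightarrow> h2 y2 = 1 \<longrightarrow> seq_cost x0 x1 x2 \<le> seq_cost x0 y1 y2)"

end

theory Submission
  imports Defs
begin

text \<open>
  Weak duality: if \<open>u = l w\<^sub>1 + m w\<^sub>2\<close> with \<open>l, m \<ge> 0\<close>, \<open>\<parallel>u\<parallel> \<le> 1\<close> and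
  \<open>\<parallel>m w\<^sub>2\<parallel> \<le> 1\<close>, then for every feasible pair \<open>(y\<^sub>1, y\<^sub>2)\<close>
  \<open>-u\<cdot>x\<^sub>0 = u\<cdot>(y\<^sub>1 - x\<^sub>0) + m w\<^sub>2\<cdot>(y\<^sub>2 - y\<^sub>1) - l w\<^sub>1\<cdot>y\<^sub>1 - m w\<^sub>2\<cdot>y\<^sub>2 \<le> \<parallel>y\<^sub>1 - x\<^sub>0\<parallel> + \<parallel>y\<^sub>2 - y\<^sub>1\<parallel>\<close>,
  so a feasible pair of cost \<open>-u\<cdot>x\<^sub>0\<close> is a best response.
  In the orthonormal frame \<open>(w\<^sub>1, J)\<close>, with \<open>J\<close> the direction of \<open>P\<^sub>w\<^sub>1(x\<^sub>0)\<close>, we have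
  \<open>x\<^sub>0 = -d w\<^sub>1 + a J\<close> and \<open>w\<^sub>2 = -cos \<theta> w\<^sub>1 - sin \<theta> J\<close>, where \<open>d = d\<^sub>w\<^sub>1(x\<^sub>0)\<close> and
  \<open>a = \<parallel>P\<^sub>w\<^sub>1(x\<^sub>0)\<parallel>\<close>. If \<open>a |cos \<theta>| \<le> d sin \<theta>\<close>, going straight to the origin is
  optimal, certified by \<open>u = -x\<^sub>0/\<parallel>x\<^sub>0\<parallel>\<close>. Otherwise the path through the point \<open>x\<^sub>1\<close> on the
  boundary of the first half-plane, followed by the projection onto the second, costs
  \<open>d |cos \<theta>| + a sin \<theta>\<close> and is certified by \<open>u = |cos \<theta>| w\<^sub>1 - sin \<theta> J = (cos \<theta> + |cos \<theta>|) w\<^sub>1 + w\<^sub>2\<close>.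
\<close>

lemma vector_2_orthogonal_to_pair_eq_0:
  fixes v w j :: "real^2"
  assumes "w \<noteq> 0" "j \<noteq> 0" "w \<bullet> j = 0" "v \<bullet> w = 0" "v \<bullet> j = 0"
  shows "v = 0"
proof -
  define D where "D = w$1 * j$2 - w$2 * j$1"
  have "D\<^sup>2 = (w \<bullet> w) * (j \<bullet> j) - (w \<bullet> j)\<^sup>2"
    by (simp add: D_def inner_vec_def sum_2 power2_eq_square algebra_simps)
  with assms(1-3) have "D \<noteq> 0"
    by auto
  moreover have "v$1 * D = j$2 * (v \<bullet> w) - w$2 * (v \<bullet> j)"
    and "v$2 * D = w$1 * (v \<bullet> j) - j$1 * (v \<bullet> w)"
    by (simp_all add: D_def inner_vec_def sum_2 algebra_simps)
  ultimately show ?thesis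
    using assms(4,5) by (simp add: vec_eq_iff forall_2)
qed

lemma vector_2_orthonormal_expansion:
  fixes y w j :: "real^2"
  assumes "norm w = 1" "norm j = 1" "w \<bullet> j = 0"
  shows "y = (y \<bullet> w) *\<^sub>R w + (y \<bullet> j) *\<^sub>R j"
proof -
  have "w \<bullet> w = 1" "j \<bullet> j = 1" "j \<bullet> w = 0"
    using assms by (simp_all add: norm_eq_1 inner_commute)
  then have "y - ((y \<bullet> w) *\<^sub>R w + (y \<bullet> j) *\<^sub>R j) = 0"
    using assms by (intro vector_2_orthogonal_to_pair_eq_0[of w j])
      (auto simp: inner_diff_left inner_add_left)
  then show ?thesis
    by simp
qed

lemma inner_orthonormal_combination:
  fixes w j :: "'a::real_inner"
  assumes "norm w = 1" "norm j = 1" "w \<bullet> j = 0"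
  shows "(\<alpha> *\<^sub>R w + \<beta> *\<^sub>R j) \<bullet> (\<gamma> *\<^sub>R w + \<delta> *\<^sub>R j) = \<alpha> * \<gamma> + \<beta> * \<delta>"
  using assms by (simp add: inner_add_left inner_add_right inner_commute norm_eq_1)

lemma norm_orthonormal_combination:
  fixes w j :: "'a::real_inner"
  assumes "norm w = 1" "norm j = 1" "w \<bullet> j = 0"
  shows "norm (\<alpha> *\<^sub>R w + \<beta> *\<^sub>R j) = sqrt (\<alpha>\<^sup>2 + \<beta>\<^sup>2)"
  using inner_orthonormal_combination[OF assms]
  by (simp add: norm_eq_sqrt_inner power2_eq_square)

lemma lin_clf_eq_1_iff: "lin_clf w x = 1 \<longleftrightarrow> 0 \<le> w \<bullet> x"
  by (simp add: lin_clf_def)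

lemma lin_clf_eq_0_iff: "lin_clf w x = 0 \<longleftrightarrow> w \<bullet> x < 0"
  by (auto simp: lin_clf_def)

lemma lin_clf_proj_hs:
  assumes "norm w = 1"
  shows "lin_clf w (proj_hs w x) = 1"
  using assms by (simp add: lin_clf_def proj_hs_def inner_diff_right norm_eq_1)

lemma norm_proj_hs_diff:
  assumes "norm w = 1"
  shows "norm (proj_hs w x - x) = dist_hs w x"
  using assms by (simp add: proj_hs_def dist_hs_def)

lemma seq_cost_ge_dual:
  assumes "norm (l *\<^sub>R w1 + m *\<^sub>R w2) \<le> 1" "norm (m *\<^sub>R w2) \<le> 1" "0 \<le> l" "0 \<le> m"
    and "lin_clf w1 y1 = 1" "lin_clf w2 y2 = 1"
  shows "- ((l *\<^sub>R w1 + m *\<^sub>R w2) \<bullet> x0) \<le> seq_cost x0 y1 y2"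
proof -
  define u where "u = l *\<^sub>R w1 + m *\<^sub>R w2"
  have "u \<bullet> (y1 - x0) \<le> norm u * norm (y1 - x0)"
    by (rule norm_cauchy_schwarz)
  also have "\<dots> \<le> norm (y1 - x0)"
    using assms(1) by (simp add: u_def mult_left_le_one_le)
  finally have first_leg: "u \<bullet> (y1 - x0) \<le> norm (y1 - x0)" .
  have "(m *\<^sub>R w2) \<bullet> (y2 - y1) \<le> norm (m *\<^sub>R w2) * norm (y2 - y1)"
    by (rule norm_cauchy_schwarz)
  also have "\<dots> \<le> norm (y2 - y1)"
    using assms(2) by (simp add: mult_left_le_one_le)
  finally have second_leg: "(m *\<^sub>R w2) \<bullet> (y2 - y1) \<le> norm (y2 - y1)" .
  have feasible: "0 \<le> l * (w1 \<bullet> y1)" "0 \<le> m * (w2 \<bullet> y2)"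
    using assms(3-6) unfolding lin_clf_eq_1_iff by simp_all
  have "u \<bullet> (y1 - x0) + (m *\<^sub>R w2) \<bullet> (y2 - y1) = l * (w1 \<bullet> y1) + m * (w2 \<bullet> y2) - u \<bullet> x0"
    unfolding u_def by (simp add: inner_diff_right inner_add_left)
  then show ?thesis
    using first_leg second_leg feasible unfolding u_def[symmetric] seq_cost_def by linarith
qed

lemma best_response_of_dual_certificate:
  assumes "lin_clf w1 x1 = 1" "lin_clf w2 x2 = 1"
    and "norm (l *\<^sub>R w1 + m *\<^sub>R w2) \<le> 1" "norm (m *\<^sub>R w2) \<le> 1" "0 \<le> l" "0 \<le> m"
    and "seq_cost x0 x1 x2 = - ((l *\<^sub>R w1 + m *\<^sub>R w2) \<bullet> x0)"
  shows "best_response x0 (lin_clf w1) (lin_clf w2) x1 x2"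
  using assms seq_cost_ge_dual[OF assms(3-6)] unfolding best_response_def by simp

lemma c_seq_eq_seq_cost:
  assumes "best_response x0 h1 h2 x1 x2"
  shows "c_seq x0 h1 h2 = seq_cost x0 x1 x2"
  unfolding c_seq_def
proof (rule cInf_eq_minimum)
  show "seq_cost x0 x1 x2 \<in> {seq_cost x0 y1 y2 |y1 y2. h1 y1 = 1 \<and> h2 y2 = 1}"
    using assms unfolding best_response_def by blast
next
  fix z assume "z \<in> {seq_cost x0 y1 y2 |y1 y2. h1 y1 = 1 \<and> h2 y2 = 1}"
  then show "seq_cost x0 x1 x2 \<le> z"
    using assms unfolding best_response_def by blast
qed

lemma classifier_frame:
  assumes w1: "norm w1 = 1" and w2: "norm w2 = 1"
    and "lin_clf w1 x0 = 0" "lin_clf w2 (proj_hs w1 x0) = 0"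
    and "0 < \<theta>" "\<theta> < pi" "cos \<theta> = - (w1 \<bullet> w2)"
  obtains J where "norm J = 1" "w1 \<bullet> J = 0" "proj_hs w1 x0 = norm (proj_hs w1 x0) *\<^sub>R J"
    "x0 = (- dist_hs w1 x0) *\<^sub>R w1 + norm (proj_hs w1 x0) *\<^sub>R J"
    "w2 = (- cos \<theta>) *\<^sub>R w1 + (- sin \<theta>) *\<^sub>R J"
    "0 < dist_hs w1 x0" "0 < norm (proj_hs w1 x0)"
proof
  let ?p = "proj_hs w1 x0"
  define J where "J = (1 / norm ?p) *\<^sub>R ?p"
  have "w1 \<bullet> x0 < 0" "w2 \<bullet> ?p < 0"
    using assms(3,4) by (simp_all add: lin_clf_eq_0_iff)
  then show "0 < dist_hs w1 x0" "0 < norm ?p"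
    by (auto simp: dist_hs_def)
  have p_eq: "?p = x0 + dist_hs w1 x0 *\<^sub>R w1"
    using \<open>w1 \<bullet> x0 < 0\<close> by (simp add: proj_hs_def dist_hs_def)
  have "?p \<noteq> 0"
    using \<open>w2 \<bullet> ?p < 0\<close> by auto
  then show p_J: "?p = norm ?p *\<^sub>R J"
    by (simp add: J_def)
  show "norm J = 1"
    using \<open>?p \<noteq> 0\<close> by (simp add: J_def)
  have "w1 \<bullet> ?p = 0"
    using \<open>w1 \<bullet> x0 < 0\<close> w1
    by (simp add: p_eq dist_hs_def inner_add_right inner_diff_right norm_eq_1)
  then show w1_J: "w1 \<bullet> J = 0"
    by (simp add: J_def)
  show "x0 = (- dist_hs w1 x0) *\<^sub>R w1 + norm ?p *\<^sub>R J"
    using p_eq p_J by (simp add: algebra_simps)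
  define r where "r = w2 \<bullet> J"
  have w2_eq: "w2 = (- cos \<theta>) *\<^sub>R w1 + r *\<^sub>R J"
    using vector_2_orthonormal_expansion[OF w1 \<open>norm J = 1\<close> w1_J, of w2] assms(7)
    by (simp add: r_def inner_commute)
  have "r < 0"
    using \<open>w2 \<bullet> ?p < 0\<close> \<open>?p \<noteq> 0\<close>
    by (subst (asm) p_J) (simp add: r_def zero_less_mult_iff mult_less_0_iff)
  moreover have "norm w2 = sqrt ((- cos \<theta>)\<^sup>2 + r\<^sup>2)"
    by (subst w2_eq) (rule norm_orthonormal_combination[OF w1 \<open>norm J = 1\<close> w1_J])
  then have "r\<^sup>2 = (sin \<theta>)\<^sup>2"
    using w2 by (simp add: sin_squared_eq)
  moreover have "0 < sin \<theta>"
    using assms(5,6) by (rule sin_gt_zero)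
  ultimately have "r = - sin \<theta>"
    by (metis power2_eq_iff less_asym)
  then show "w2 = (- cos \<theta>) *\<^sub>R w1 + (- sin \<theta>) *\<^sub>R J"
    using w2_eq by simp
qed

context
  fixes w1 w2 J x0 :: "real^2" and a d c s :: real
  assumes frame: "norm w1 = 1" "norm J = 1" "w1 \<bullet> J = 0"
    and x0_eq: "x0 = (- d) *\<^sub>R w1 + a *\<^sub>R J" and w2_eq: "w2 = (- c) *\<^sub>R w1 + (- s) *\<^sub>R J"
    and cos_sin: "c\<^sup>2 + s\<^sup>2 = 1" and pos: "0 < s" "0 < d" "0 < a"
begin

lemma norm_w2: "norm w2 = 1"
  unfolding w2_eq norm_orthonormal_combination[OF frame] using cos_sin by simp

lemma norm_x0: "norm x0 = sqrt (d\<^sup>2 + a\<^sup>2)"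
  unfolding x0_eq norm_orthonormal_combination[OF frame] by simp

lemma le_sin_mult_norm_x0:
  assumes "a * \<bar>c\<bar> \<le> s * d"
  shows "a \<le> s * norm x0"
proof (rule power2_le_imp_le)
  have "a\<^sup>2 = (a * \<bar>c\<bar>)\<^sup>2 + a\<^sup>2 * s\<^sup>2"
    using cos_sin by (simp add: algebra_simps flip: distrib_left)
  also have "\<dots> \<le> (s * d)\<^sup>2 + a\<^sup>2 * s\<^sup>2"
    using assms pos by (intro add_right_mono power_mono) auto
  also have "\<dots> = (s * norm x0)\<^sup>2"
    by (simp add: norm_x0 algebra_simps)
  finally show "a\<^sup>2 \<le> (s * norm x0)\<^sup>2" .
qed (use pos in simp)

lemma best_response_origin:
  assumes "c = 0 \<or> a / d < s / \<bar>c\<bar>"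
  shows "best_response x0 (lin_clf w1) (lin_clf w2) 0 0"
proof -
  have "a * \<bar>c\<bar> \<le> s * d"
    using assms pos by (cases "c = 0") (simp_all add: field_simps)
  define L where "L = norm x0"
  have "0 < L"
    using pos by (simp add: L_def norm_x0 add_pos_nonneg)
  \<comment> \<open>the coordinates of \<open>-x0 / norm x0\<close> in the basis \<open>(w1, w2)\<close>\<close>
  define l where "l = (s * d + a * c) / (s * L)"
  define m where "m = a / (s * L)"
  have "l *\<^sub>R w1 + m *\<^sub>R w2 = (l - m * c) *\<^sub>R w1 + (- (m * s)) *\<^sub>R J"
    by (simp add: w2_eq algebra_simps)
  also have "\<dots> = (d / L) *\<^sub>R w1 + (- (a / L)) *\<^sub>R J"
    using pos \<open>0 < L\<close> by (simp add: l_def m_def field_simps)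
  finally have u_eq: "l *\<^sub>R w1 + m *\<^sub>R w2 = (d / L) *\<^sub>R w1 + (- (a / L)) *\<^sub>R J" .
  show ?thesis
  proof (rule best_response_of_dual_certificate)
    show "norm (l *\<^sub>R w1 + m *\<^sub>R w2) \<le> 1"
      using \<open>0 < L\<close> unfolding u_eq norm_orthonormal_combination[OF frame]
      by (simp add: L_def norm_x0 power_divide add_divide_distrib[symmetric])
    have "m \<le> 1"
      using le_sin_mult_norm_x0[OF \<open>a * \<bar>c\<bar> \<le> s * d\<close>] pos \<open>0 < L\<close>
      by (simp add: m_def L_def pos_divide_le_eq)
    moreover show "0 \<le> m"
      using pos \<open>0 < L\<close> by (simp add: m_def)
    ultimately show "norm (m *\<^sub>R w2) \<le> 1"
      using norm_w2 by simp
    have "a * (- \<bar>c\<bar>) \<le> a * c"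
      using pos by (intro mult_left_mono) auto
    then show "0 \<le> l"
      using \<open>a * \<bar>c\<bar> \<le> s * d\<close> pos \<open>0 < L\<close> unfolding l_def by (intro divide_nonneg_pos) simp_all
    have "- ((l *\<^sub>R w1 + m *\<^sub>R w2) \<bullet> x0) = (d\<^sup>2 + a\<^sup>2) / L"
      unfolding u_eq x0_eq inner_orthonormal_combination[OF frame]
      by (simp add: power2_eq_square add_divide_distrib)
    also have "\<dots> = L"
      using \<open>0 < L\<close> by (simp add: L_def norm_x0 divide_eq_eq power2_eq_square[symmetric])
    finally show "seq_cost x0 0 0 = - ((l *\<^sub>R w1 + m *\<^sub>R w2) \<bullet> x0)"
      by (simp add: seq_cost_def L_def)
  qed (simp_all add: lin_clf_def)
qed

lemma seq_cost_two_step: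
  assumes "c \<noteq> 0" "s * d \<le> a * \<bar>c\<bar>" and x1_eq: "x1 = (a - d * s / \<bar>c\<bar>) *\<^sub>R J"
  shows "seq_cost x0 x1 (proj_hs w2 x1) = d * \<bar>c\<bar> + a * s"
proof -
  define b where "b = a - d * s / \<bar>c\<bar>"
  have "0 \<le> b"
    using assms(1,2) by (simp add: b_def pos_divide_le_eq mult.commute)
  have "x1 - x0 = d *\<^sub>R w1 + (- (d * s / \<bar>c\<bar>)) *\<^sub>R J"
    by (simp add: x1_eq x0_eq algebra_simps)
  then have "norm (x1 - x0) = sqrt (d\<^sup>2 + (d * s / \<bar>c\<bar>)\<^sup>2)"
    by (simp only: norm_orthonormal_combination[OF frame] power2_minus)
  also have "d\<^sup>2 + (d * s / \<bar>c\<bar>)\<^sup>2 = (d / \<bar>c\<bar>)\<^sup>2 * (c\<^sup>2 + s\<^sup>2)"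
    using assms(1) by (simp add: field_simps)
  finally have "norm (x1 - x0) = d / \<bar>c\<bar>"
    using cos_sin pos by simp
  moreover have "w2 \<bullet> x1 = - (s * b)"
    unfolding w2_eq x1_eq b_def[symmetric]
    using inner_orthonormal_combination[OF frame, of "- c" "- s" 0 b] by simp
  then have "norm (proj_hs w2 x1 - x1) = s * b"
    using pos \<open>0 \<le> b\<close> by (auto simp: norm_proj_hs_diff[OF norm_w2] dist_hs_def mult_le_0_iff)
  moreover have "d / \<bar>c\<bar> + s * b = d * \<bar>c\<bar> + a * s"
  proof -
    have "d / \<bar>c\<bar> + s * b = d * (1 - s\<^sup>2) / \<bar>c\<bar> + a * s"
      using assms(1) by (simp add: b_def field_simps power2_eq_square)
    also have "1 - s\<^sup>2 = c\<^sup>2"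
      using cos_sin by simp
    finally show ?thesis
      using assms(1) by (simp add: field_simps power2_eq_square)
  qed
  ultimately show ?thesis
    by (simp add: seq_cost_def)
qed

lemma best_response_two_step:
  assumes "c \<noteq> 0" "s / \<bar>c\<bar> \<le> a / d" and x1_def: "x1 = (1 - d / a * (s / \<bar>c\<bar>)) *\<^sub>R (a *\<^sub>R J)"
  shows "best_response x0 (lin_clf w1) (lin_clf w2) x1 (proj_hs w2 x1)"
    and "seq_cost x0 x1 (proj_hs w2 x1) = d * \<bar>c\<bar> + a * s"
proof -
  have "s * d \<le> a * \<bar>c\<bar>"
    using assms(1,2) pos by (simp add: field_simps)
  moreover have "x1 = (a - d * s / \<bar>c\<bar>) *\<^sub>R J"
    using pos by (simp add: x1_def field_simps)
  ultimately show cost: "seq_cost x0 x1 (proj_hs w2 x1) = d * \<bar>c\<bar> + a * s"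
    by (rule seq_cost_two_step[OF assms(1)])
  show "best_response x0 (lin_clf w1) (lin_clf w2) x1 (proj_hs w2 x1)"
  proof (rule best_response_of_dual_certificate[where l = "c + \<bar>c\<bar>" and m = 1])
    have u_eq: "(c + \<bar>c\<bar>) *\<^sub>R w1 + 1 *\<^sub>R w2 = \<bar>c\<bar> *\<^sub>R w1 + (- s) *\<^sub>R J"
      by (simp add: w2_eq algebra_simps)
    show "norm ((c + \<bar>c\<bar>) *\<^sub>R w1 + 1 *\<^sub>R w2) \<le> 1"
      using cos_sin unfolding u_eq norm_orthonormal_combination[OF frame] by simp
    have "- (((c + \<bar>c\<bar>) *\<^sub>R w1 + 1 *\<^sub>R w2) \<bullet> x0) = d * \<bar>c\<bar> + a * s"
      unfolding u_eq by (subst x0_eq, subst inner_orthonormal_combination[OF frame]) simp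
    then show "seq_cost x0 x1 (proj_hs w2 x1) = - (((c + \<bar>c\<bar>) *\<^sub>R w1 + 1 *\<^sub>R w2) \<bullet> x0)"
      using cost by simp
    show "lin_clf w1 x1 = 1"
      using frame by (simp add: x1_def lin_clf_def)
  qed (simp_all add: norm_w2 lin_clf_proj_hs)
qed

end

theorem mainTheorem13:
  fixes w1 w2 x0 :: "real^2" and \<theta> :: real
  assumes w1: "norm w1 = 1" and w2: "norm w2 = 1"
    and h1x0: "lin_clf w1 x0 = 0"
    and h2P: "lin_clf w2 (proj_hs w1 x0) = 0"
    and th: "0 < \<theta>" "\<theta> < pi" and cth: "cos \<theta> = - (w1 \<bullet> w2)"
  shows
    "((cos \<theta> = 0 \<or> \<bar>tan \<theta>\<bar> > norm (proj_hs w1 x0) / dist_hs w1 x0) \<longrightarrow>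
       best_response x0 (lin_clf w1) (lin_clf w2) 0 0 \<and>
       c_seq x0 (lin_clf w1) (lin_clf w2) = norm x0) \<and>
    ((cos \<theta> \<noteq> 0 \<and> \<bar>tan \<theta>\<bar> \<le> norm (proj_hs w1 x0) / dist_hs w1 x0) \<longrightarrow>
       (let x1 = (1 - dist_hs w1 x0 / norm (proj_hs w1 x0) * \<bar>tan \<theta>\<bar>) *\<^sub>R proj_hs w1 x0
        in best_response x0 (lin_clf w1) (lin_clf w2) x1 (proj_hs w2 x1)) \<and>
       c_seq x0 (lin_clf w1) (lin_clf w2) =
         dist_hs w1 x0 * \<bar>cos \<theta>\<bar> + norm (proj_hs w1 x0) * sin \<theta>)"
proof -
  define d a where "d = dist_hs w1 x0" and "a = norm (proj_hs w1 x0)"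
  obtain J where J: "norm J = 1" "w1 \<bullet> J = 0" and p_eq: "proj_hs w1 x0 = a *\<^sub>R J"
    and x0_eq: "x0 = (- d) *\<^sub>R w1 + a *\<^sub>R J"
    and w2_eq: "w2 = (- cos \<theta>) *\<^sub>R w1 + (- sin \<theta>) *\<^sub>R J" and "0 < d" "0 < a"
    using classifier_frame[OF w1 w2 h1x0 h2P th cth] unfolding a_def d_def by blast
  have "0 < sin \<theta>"
    using th by (rule sin_gt_zero)
  then have tan_eq: "\<bar>tan \<theta>\<bar> = sin \<theta> / \<bar>cos \<theta>\<bar>"
    by (simp add: tan_def)
  note frame = w1 J x0_eq w2_eq sin_cos_squared_add2 \<open>0 < sin \<theta>\<close> \<open>0 < d\<close> \<open>0 < a\<close>
  show ?thesis
    unfolding d_def[symmetric] a_def[symmetric] unfolding tan_eq p_eq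
  proof (intro conjI impI)
    assume "cos \<theta> = 0 \<or> a / d < sin \<theta> / \<bar>cos \<theta>\<bar>"
    then show br: "best_response x0 (lin_clf w1) (lin_clf w2) 0 0"
      by (rule best_response_origin[OF frame])
    show "c_seq x0 (lin_clf w1) (lin_clf w2) = norm x0"
      using c_seq_eq_seq_cost[OF br] by (simp add: seq_cost_def)
  next
    assume "cos \<theta> \<noteq> 0 \<and> sin \<theta> / \<bar>cos \<theta>\<bar> \<le> a / d"
    then show "let x1 = (1 - d / a * (sin \<theta> / \<bar>cos \<theta>\<bar>)) *\<^sub>R (a *\<^sub>R J)
        in best_response x0 (lin_clf w1) (lin_clf w2) x1 (proj_hs w2 x1)"
      and "c_seq x0 (lin_clf w1) (lin_clf w2) = d * \<bar>cos \<theta>\<bar> + a * sin \<theta>"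
      using best_response_two_step[OF frame _ _ refl] c_seq_eq_seq_cost by (simp_all add: Let_def)
  qed
qed

end
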